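(* Let $(p_n)$ be a sequence in $(0,1)$ such that $\lim_{n\to\infty} p_n\log n=\alpha$ exists, let $L$ and $k$ be positive integers, and let $q_{k,n}=\Pr\left(\frac{k-1}{L}\le \frac{N_1}{\log n}<\frac{k}{L}\right)$ where $N_1\sim\mathrm{Geometric}(p_n)$. Let $\mathcal Y_k$ be the collection of output fragments $\vec Y_i$ of the torn-paper channel (block length $n$, tearing probability $p_n$) whose underlying fragment length $N_{\pi_i}$ satisfies $\frac{k-1}{L}\log n\le N_{\pi_i}<\frac{k}{L}\log n$, and let $|\mathcal Y_k|$ be the number of such fragments. Then for any $\epsilon>0$ and all $n$ large enough, $$\Pr\left(\big||\mathcal Y_k| - n p_n q_{k,n}\big| > \epsilon n p_n\right)\le 4e^{-n p_n^2\epsilon^2/4}.$$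
   Context: Logarithms are base 2. The torn-paper channel with block length $n$ and tearing probability $p_n$: the input $X^n\in\{0,1\}^n$ is cut into consecutive fragments $\vec X_1,\dots,\vec X_K$, where $N_1,N_2,\dots$ are i.i.d. $\mathrm{Geometric}(p_n)$ (support $\{1,2,\dots\}$, mean $1/p_n$), $K$ is the smallest index with $\sum_{i=1}^K N_i\ge n$, $\vec X_i$ consists of positions $1+\sum_{j<i}N_j$ through $\sum_{j\le i}N_j$ for $i<K$, and $\vec X_K$ of positions $1+\sum_{j<K}N_j$ through $n$ (equivalently, a cut is placed independently between each pair of consecutive bits with probability $p_n$, so $K=1+\sum_{i=2}^n T_i$ with $T_i$ i.i.d. $\mathrm{Bernoulli}(p_n)$). Given $K$, $\pi$ is a uniformly random permutation of $\{1,\dots,K\}$ and the output is the unordered collection $\{\vec Y_1,\dots,\vec Y_K\}$ with $\vec Y_i=\vec X_{\pi_i}$. *)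

theory Defs
  imports "HOL-Probability.Probability"
begin

definition geom1 :: "real \<Rightarrow> nat pmf" where
  "geom1 p = map_pmf Suc (geometric_pmf p)"

text \<open>Joint law of the fragment lengths N_1..N_n (stored 0-indexed as N 0 .. N (n-1)),
  i.i.d. geom1 (p n). Since every N_i \<ge> 1, K \<le> n, so only these matter.\<close>
definition frag_lengths :: "nat \<Rightarrow> real \<Rightarrow> (nat \<Rightarrow> nat) pmf" where
  "frag_lengths n p = Pi_pmf {..<n} 1 (\<lambda>_. geom1 p)"

definition tp_K :: "nat \<Rightarrow> (nat \<Rightarrow> nat) \<Rightarrow> nat" where
  "tp_K n N = (LEAST K. real n \<le> (\<Sum>i<K. real (N i)))"

text \<open>|Y_k|: number of fragments (among the K) whose underlying length N lies in
  [(k-1)/L log n, k/L log n). The permutation pi does not affect this count.\<close>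
definition count_Yk :: "nat \<Rightarrow> nat \<Rightarrow> nat \<Rightarrow> (nat \<Rightarrow> nat) \<Rightarrow> nat" where
  "count_Yk n L k N = card {i. i < tp_K n N \<and>
      (real k - 1) / real L * log 2 (real n) \<le> real (N i) \<and>
      real (N i) < real k / real L * log 2 (real n)}"

definition q_kn :: "nat \<Rightarrow> nat \<Rightarrow> nat \<Rightarrow> real \<Rightarrow> real" where
  "q_kn L k n p = measure_pmf.prob (geom1 p)
     {m. (real k - 1) / real L \<le> real m / log 2 (real n) \<and>
         real m / log 2 (real n) < real k / real L}"

end

(*
  Put x = n p and d = e/4 with e = min eps 1.
  Unless the first floor(x (1 - d)) lengths already sum to at least n, or the first
  ceil(x (1 + d)) lengths sum to less than n, K lies between these two indices, and |Y_k| is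
  sandwiched between the numbers of lengths in the window among the first floor(x (1 - d))
  and the first ceil(x (1 + d)) fragments.  These counts are binomial with mean close to x q.
  Each of the four exceptional events has probability at most exp (1 - x e^2 / 128) by a
  Chernoff bound, i.e. Markov's inequality for a product of i.i.d. factors z^(N_i) or
  w^[N_i in the window].  Since p log n converges, p tends to 0, so eventually p is small
  compared with e^2, and then 4 exp (1 - x e^2 / 128) is at most 4 exp (- n p^2 eps^2 / 4)
  whenever the latter is below 1.
*)

theory Submission
  imports Defs "HOL-Real_Asymp.Real_Asymp"
begin

lemma nn_integral_geom1_power:
  assumes "0 < p" "p < 1" "0 \<le> z" "(1 - p) * z < 1"
  shows "(\<integral>\<^sup>+v. ennreal (z ^ v) \<partial>geom1 p) = ennreal (p * z / (1 - (1 - p) * z))"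
proof -
  have eq: "ennreal (pmf (geometric_pmf p) k) * ennreal (z ^ Suc k) = ennreal (p * z * ((1 - p) * z) ^ k)" for k
    using assms by (simp add: ennreal_mult'[symmetric] power_mult_distrib mult_ac)
  have "(\<lambda>k. p * z * ((1 - p) * z) ^ k) sums (p * z * (1 / (1 - (1 - p) * z)))"
    using assms by (intro sums_mult geometric_sums) simp
  then have "(\<Sum>k. ennreal (p * z * ((1 - p) * z) ^ k)) = ennreal (p * z / (1 - (1 - p) * z))"
    using assms by (subst suminf_ennreal_eq) auto
  then show ?thesis
    unfolding geom1_def nn_integral_map_pmf
    by (simp add: nn_integral_measure_pmf nn_integral_count_space_nat eq del: power_Suc)
qed

lemma nn_integral_if_weight:
  fixes D :: "'a pmf"
  assumes "0 \<le> w"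
  shows "(\<integral>\<^sup>+v. ennreal (if P v then w else 1) \<partial>D)
     = ennreal (1 - measure_pmf.prob D {v. P v} + measure_pmf.prob D {v. P v} * w)"
proof -
  let ?q = "measure_pmf.prob D {v. P v}"
  have "(\<integral>\<^sup>+v. ennreal (if P v then w else 1) \<partial>D)
      = (\<integral>\<^sup>+v. ennreal w * indicator {v. P v} v + indicator {v. \<not> P v} v \<partial>D)"
    by (intro nn_integral_cong) (auto simp: indicator_def)
  also have "\<dots> = ennreal w * ennreal ?q + ennreal (measure_pmf.prob D {v. \<not> P v})"
    by (simp add: nn_integral_add nn_integral_cmult_indicator measure_pmf.emeasure_eq_measure)
  also have "measure_pmf.prob D {v. \<not> P v} = 1 - ?q"
    using measure_pmf.prob_compl[of "{v. P v}" D] by (simp add: Compl_eq_Diff_UNIV[symmetric] Collect_neg_eq)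
  finally show ?thesis
    using assms by (simp add: ennreal_mult'[symmetric] ennreal_plus[symmetric] algebra_simps)
qed

lemma prob_Pi_pmf_prod_ge_le:
  fixes D :: "'a pmf" and f :: "'a \<Rightarrow> real"
  assumes "m \<le> n" "\<And>v. 0 \<le> f v" "0 < c" "0 \<le> a" "(\<integral>\<^sup>+v. f v \<partial>D) = ennreal a"
  shows "measure_pmf.prob (Pi_pmf {..<n} d (\<lambda>_. D)) {N. c \<le> (\<Prod>i<m. f (N i))} \<le> a ^ m / c"
proof -
  let ?S = "{N. c \<le> (\<Prod>i<m. f (N i))}"
  have "Pi_pmf {..<m} d (\<lambda>_. D) = map_pmf (\<lambda>N i. if i \<in> {..<m} then N i else d) (Pi_pmf {..<n} d (\<lambda>_. D))"
    using assms(1) by (intro Pi_pmf_subset) auto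
  then have "measure_pmf.prob (Pi_pmf {..<n} d (\<lambda>_. D)) ?S = measure_pmf.prob (Pi_pmf {..<m} d (\<lambda>_. D)) ?S"
    by (simp add: vimage_def)
  also have "\<dots> \<le> a ^ m / c"
  proof -
    let ?M = "Pi_pmf {..<m} d (\<lambda>_. D)"
    have "?S = {N\<in>UNIV. 1 \<le> ennreal (1 / c) * ennreal (\<Prod>i<m. f (N i))}"
      using assms(2,3) by (auto simp: ennreal_mult'[symmetric] field_simps prod_nonneg simp flip: ennreal_1)
    then have "emeasure ?M ?S \<le> ennreal (1 / c) * (\<integral>\<^sup>+N. ennreal (\<Prod>i<m. f (N i)) * indicator UNIV N \<partial>?M)"
      by (simp only:) (rule nn_integral_Markov_inequality; simp)
    also have "(\<integral>\<^sup>+N. ennreal (\<Prod>i<m. f (N i)) * indicator UNIV N \<partial>?M) = (\<integral>\<^sup>+N. (\<Prod>i<m. ennreal (f (N i))) \<partial>?M)"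
      using assms(2) by (simp add: prod_ennreal)
    also have "\<dots> = (\<Prod>i<m. \<integral>\<^sup>+v. ennreal (f v) \<partial>D)"
      by (rule nn_integral_prod_Pi_pmf) simp
    also have "\<dots> = ennreal (a ^ m)"
      using assms(4,5) by (simp add: ennreal_power)
    finally show ?thesis
      using assms(3,4) by (simp add: measure_pmf.emeasure_eq_measure ennreal_mult'[symmetric] divide_inverse mult.commute)
  qed
  finally show ?thesis .
qed

lemma prob_partial_sum_ge_chernoff:
  assumes "0 < p" "p < 1" "m \<le> n" "1 < z" "(1 - p) * z < 1"
  shows "measure_pmf.prob (frag_lengths n p) {N. t \<le> (\<Sum>i<m. N i)} \<le> (p * z / (1 - (1 - p) * z)) ^ m / z ^ t"
proof -
  have "measure_pmf.prob (frag_lengths n p) {N. t \<le> (\<Sum>i<m. N i)}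
     \<le> measure_pmf.prob (frag_lengths n p) {N. z ^ t \<le> (\<Prod>i<m. z ^ N i)}"
    using assms(4) by (intro measure_pmf.finite_measure_mono) (auto simp flip: power_sum intro: power_increasing)
  also have "\<dots> \<le> (p * z / (1 - (1 - p) * z)) ^ m / z ^ t"
    unfolding frag_lengths_def using assms
    by (intro prob_Pi_pmf_prod_ge_le nn_integral_geom1_power) auto
  finally show ?thesis .
qed

lemma prob_partial_sum_lt_chernoff:
  assumes "0 < p" "p < 1" "m \<le> n" "0 < z" "z < 1"
  shows "measure_pmf.prob (frag_lengths n p) {N. (\<Sum>i<m. N i) < t} \<le> (p * z / (1 - (1 - p) * z)) ^ m / z ^ t"
proof -
  have "measure_pmf.prob (frag_lengths n p) {N. (\<Sum>i<m. N i) < t}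
     \<le> measure_pmf.prob (frag_lengths n p) {N. z ^ t \<le> (\<Prod>i<m. z ^ N i)}"
    using assms(4,5) by (intro measure_pmf.finite_measure_mono) (auto simp flip: power_sum intro: power_decreasing)
  also have "\<dots> \<le> (p * z / (1 - (1 - p) * z)) ^ m / z ^ t"
    unfolding frag_lengths_def using assms mult_strict_mono[of "1 - p" 1 z 1]
    by (intro prob_Pi_pmf_prod_ge_le nn_integral_geom1_power) auto
  finally show ?thesis .
qed

lemma prod_if_eq_power_card:
  fixes m :: nat
  shows "(\<Prod>i<m. if P (N i) then w else 1) = w ^ card {i. i < m \<and> P (N i)}"
proof -
  have "(\<Prod>i<m. if P (N i) then w else 1) = w ^ card ({..<m} \<inter> {i. P (N i)})"
    by (subst prod.If_cases) auto
  also have "{..<m} \<inter> {i. P (N i)} = {i. i < m \<and> P (N i)}"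
    by auto
  finally show ?thesis .
qed

lemma prob_count_gt_chernoff:
  fixes D :: "'a pmf" and P :: "'a \<Rightarrow> bool"
  defines "q \<equiv> measure_pmf.prob D {v. P v}"
  assumes "m \<le> n" "1 \<le> w"
  shows "measure_pmf.prob (Pi_pmf {..<n} d (\<lambda>_. D)) {N. t < real (card {i. i < m \<and> P (N i)})}
    \<le> (1 - q + q * w) ^ m / w powr t"
proof -
  have "measure_pmf.prob (Pi_pmf {..<n} d (\<lambda>_. D)) {N. t < real (card {i. i < m \<and> P (N i)})}
     \<le> measure_pmf.prob (Pi_pmf {..<n} d (\<lambda>_. D)) {N. w powr t \<le> (\<Prod>i<m. if P (N i) then w else 1)}"
    using assms(3) by (intro measure_pmf.finite_measure_mono)
      (auto simp: prod_if_eq_power_card powr_realpow[symmetric] intro: powr_mono)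
  also have "\<dots> \<le> (1 - q + q * w) ^ m / w powr t"
    unfolding q_def using assms(2,3) measure_pmf.prob_le_1[of D "{v. P v}"]
    by (intro prob_Pi_pmf_prod_ge_le nn_integral_if_weight) (auto intro: add_nonneg_nonneg)
  finally show ?thesis .
qed

lemma prob_count_lt_chernoff:
  fixes D :: "'a pmf" and P :: "'a \<Rightarrow> bool"
  defines "q \<equiv> measure_pmf.prob D {v. P v}"
  assumes "m \<le> n" "0 < w" "w \<le> 1"
  shows "measure_pmf.prob (Pi_pmf {..<n} d (\<lambda>_. D)) {N. real (card {i. i < m \<and> P (N i)}) < t}
    \<le> (1 - q + q * w) ^ m / w powr t"
proof -
  have "measure_pmf.prob (Pi_pmf {..<n} d (\<lambda>_. D)) {N. real (card {i. i < m \<and> P (N i)}) < t}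
     \<le> measure_pmf.prob (Pi_pmf {..<n} d (\<lambda>_. D)) {N. w powr t \<le> (\<Prod>i<m. if P (N i) then w else 1)}"
    using assms(3,4) by (intro measure_pmf.finite_measure_mono)
      (auto simp: prod_if_eq_power_card powr_realpow[symmetric] intro: powr_mono')
  also have "\<dots> \<le> (1 - q + q * w) ^ m / w powr t"
    unfolding q_def using assms(2,3) measure_pmf.prob_le_1[of D "{v. P v}"]
    by (intro prob_Pi_pmf_prod_ge_le nn_integral_if_weight) (auto intro: add_nonneg_nonneg)
  finally show ?thesis .
qed

lemma power_divide_le_exp:
  fixes G Z A B :: real
  assumes "0 \<le> G" "G \<le> exp A" "exp B \<le> Z"
  shows "G ^ m / Z \<le> exp (real m * A - B)"
proof -
  have "G ^ m \<le> exp (real m * A)"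
    using assms(1,2) power_mono[of G "exp A" m] by (simp add: exp_of_nat_mult)
  then have "G ^ m / Z \<le> exp (real m * A) / exp B"
    using assms by (intro frac_le) auto
  then show ?thesis
    by (simp add: exp_diff)
qed

lemma exp_mult_le_powr:
  fixes w t c :: real
  assumes "0 < w" "0 \<le> t" "c \<le> ln w"
  shows "exp (t * c) \<le> w powr t"
  using assms by (simp add: powr_def mult_left_mono)

lemma geom1_gf_one_plus_le_exp:
  fixes p g :: real
  assumes "0 < p" "p \<le> 1" "0 < g" "g < 1"
  defines "z \<equiv> 1 + g * p"
  shows "(1 - p) * z < 1" "p * z / (1 - (1 - p) * z) \<le> exp (g * p + g / (1 - g))"
proof -
  have den_pos: "0 < 1 - g + g * p"
    using assms by (simp add: add_pos_nonneg)
  have den: "1 - (1 - p) * z = p * (1 - g + g * p)"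
    by (simp add: z_def algebra_simps)
  then show "(1 - p) * z < 1"
    using assms(1) den_pos mult_pos_pos[of p "1 - g + g * p"] by linarith
  have "1 / (1 - g + g * p) \<le> 1 + g / (1 - g)"
    using assms den_pos by (simp add: field_simps)
  also have "\<dots> \<le> exp (g / (1 - g))"
    by (rule exp_ge_add_one_self)
  finally have "z * (1 / (1 - g + g * p)) \<le> exp (g * p) * exp (g / (1 - g))"
    using assms den_pos by (intro mult_mono) auto
  then show "p * z / (1 - (1 - p) * z) \<le> exp (g * p + g / (1 - g))"
    using assms(1) by (simp add: den exp_add)
qed

lemma geom1_gf_one_minus_le_exp:
  fixes p g :: real
  assumes "0 < p" "p \<le> 1" "0 < g" "g \<le> 1"
  defines "z \<equiv> 1 - g * p" and "y \<equiv> g * (1 - p)"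
  shows "0 \<le> p * z / (1 - (1 - p) * z)" "p * z / (1 - (1 - p) * z) \<le> exp (- (y - y\<^sup>2))"
proof -
  have y: "0 \<le> y" "y \<le> 1" and z: "0 \<le> z" "z \<le> 1"
    using assms mult_le_one[of g p] mult_le_one[of g "1 - p"] by (auto simp: y_def z_def)
  have "1 - (1 - p) * z = p * (1 + y)"
    by (simp add: z_def y_def algebra_simps)
  then have G_eq: "p * z / (1 - (1 - p) * z) = z * (1 / (1 + y))"
    using assms(1) by simp
  then show "0 \<le> p * z / (1 - (1 - p) * z)"
    using y z by simp
  have "y - y\<^sup>2 \<le> ln (1 + y)"
    using y by (rule ln_one_plus_pos_lower_bound)
  then have "exp (y - y\<^sup>2) \<le> 1 + y"
    using y ln_ge_iff[of "1 + y" "y - y\<^sup>2"] by simp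
  then have "1 / (1 + y) \<le> 1 / exp (y - y\<^sup>2)"
    using y by (intro divide_left_mono) auto
  then have "1 / (1 + y) \<le> exp (- (y - y\<^sup>2))"
    by (simp only: exp_minus inverse_eq_divide)
  then show "p * z / (1 - (1 - p) * z) \<le> exp (- (y - y\<^sup>2))"
    unfolding G_eq using z y by (intro mult_left_le_one_le[THEN order.trans]) auto
qed

lemma sum_ge_exponent_bound:
  fixes p \<delta> :: real
  assumes p: "0 < p" "p \<le> \<delta>\<^sup>2 / 8" and \<delta>: "0 < \<delta>" "\<delta> \<le> 1/4"
  shows "(1 - \<delta>) * (\<delta> / 2 * p + \<delta> / 2 / (1 - \<delta> / 2)) - \<delta> / 2 + (\<delta> / 2)\<^sup>2 * p \<le> - (\<delta>\<^sup>2 / 8)"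
proof -
  define g where "g = \<delta> / 2"
  have g: "0 < g" "g \<le> 1/8"
    using \<delta> by (auto simp: g_def)
  have "(g - \<delta>\<^sup>2 / 4) * (1 - g) - (1 - \<delta>) * g = \<delta> ^ 3 / 8"
    by (simp add: g_def field_simps power2_eq_square power3_eq_cube)
  then have "(1 - \<delta>) * g \<le> (g - \<delta>\<^sup>2 / 4) * (1 - g)"
    using \<delta> zero_le_power[of \<delta> 3] by linarith
  then have a1: "(1 - \<delta>) * (g / (1 - g)) \<le> g - \<delta>\<^sup>2 / 4"
    using g by (simp add: field_simps)
  have "(1 - \<delta>) * g \<le> g" "g\<^sup>2 \<le> g"
    using g \<delta> by (auto simp: power2_eq_square intro!: mult_left_le_one_le)
  then have "(1 - \<delta>) * g + g\<^sup>2 \<le> 1"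
    using g by linarith
  then have "((1 - \<delta>) * g + g\<^sup>2) * p \<le> 1 * p"
    using p by (intro mult_right_mono) auto
  with a1 show ?thesis
    using p by (simp add: g_def[symmetric] algebra_simps)
qed

lemma sum_lt_exponent_bound:
  fixes p \<delta> :: real
  assumes p: "0 < p" "p \<le> 3 * \<delta>\<^sup>2 / 64" and \<delta>: "0 < \<delta>" "\<delta> \<le> 1/4"
  shows "(1 + \<delta>) * - (\<delta> / 4 * (1 - p) - (\<delta> / 4 * (1 - p))\<^sup>2) + \<delta> / 4 + 2 * (\<delta> / 4)\<^sup>2 * p
    \<le> - (\<delta>\<^sup>2 / 8)"
proof -
  define g where "g = \<delta> / 4"
  define y where "y = g * (1 - p)"
  have g: "0 < g" "g \<le> 1/16"
    using \<delta> by (auto simp: g_def)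
  have "\<delta>\<^sup>2 \<le> (1/4)\<^sup>2"
    using \<delta> by (intro power_mono) auto
  then have y: "0 \<le> y" "y \<le> g"
    using g p by (auto simp: y_def power2_eq_square algebra_simps)
  have "(1 + \<delta>) * - (y - y\<^sup>2) + g + 2 * g\<^sup>2 * p = - (\<delta> * g) + (1 + \<delta>) * y\<^sup>2 + ((1 + \<delta>) * g + 2 * g\<^sup>2) * p"
    by (simp add: y_def algebra_simps power2_eq_square)
  moreover have "\<delta> * g = \<delta>\<^sup>2 / 4" "g\<^sup>2 = \<delta>\<^sup>2 / 16"
    by (simp_all add: g_def power2_eq_square)
  moreover have "(1 + \<delta>) * y\<^sup>2 \<le> (1 + \<delta>) * g\<^sup>2"
    using y \<delta> by (intro mult_left_mono power_mono) auto
  moreover have "(1 + \<delta>) * g\<^sup>2 \<le> (5/4) * g\<^sup>2"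
    using \<delta> by (intro mult_right_mono) auto
  moreover have "(1 + \<delta>) * g + 2 * g\<^sup>2 \<le> 1"
    using g \<delta> mult_mono[of "1 + \<delta>" "5/4" g "1/16"] mult_mono[of g "1/16" g "1/16"]
    by (simp add: power2_eq_square)
  then have "((1 + \<delta>) * g + 2 * g\<^sup>2) * p \<le> 1 * p"
    using p by (intro mult_right_mono) auto
  ultimately have "(1 + \<delta>) * - (y - y\<^sup>2) + g + 2 * g\<^sup>2 * p \<le> - (\<delta>\<^sup>2 / 8)"
    using p by linarith
  then show ?thesis
    by (simp only: g_def y_def)
qed

lemma prob_partial_sum_ge_exp:
  fixes p \<delta> :: real and m n :: nat
  assumes p: "0 < p" "p \<le> \<delta>\<^sup>2 / 8" and \<delta>: "0 < \<delta>" "\<delta> \<le> 1/4"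
    and m: "real m \<le> real n * p * (1 - \<delta>)"
  shows "measure_pmf.prob (frag_lengths n p) {N. n \<le> (\<Sum>i<m. N i)} \<le> exp (- (real n * p * \<delta>\<^sup>2 / 8))"
proof -
  \<comment> \<open>Each N i has mean 1/p, so the Chernoff parameter z has to be 1 + O(\<delta> p).\<close>
  define g where "g = \<delta> / 2"
  define z where "z = 1 + g * p"
  define A where "A = g * p + g / (1 - g)"
  have g: "0 < g" "g \<le> 1/8"
    using \<delta> by (auto simp: g_def)
  have "\<delta>\<^sup>2 \<le> (1/4)\<^sup>2"
    using \<delta> by (intro power_mono) auto
  then have p1: "p \<le> 1/128"
    using p by (simp add: power2_eq_square)
  then have "p * (1 - \<delta>) \<le> 1"
    using p \<delta> mult_left_le[of "1 - \<delta>" p] by linarith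
  then have "real m \<le> real n"
    using m mult_left_le[of "p * (1 - \<delta>)" "real n"] by (simp add: mult.assoc)
  then have "m \<le> n"
    by simp
  have gf: "(1 - p) * z < 1" "p * z / (1 - (1 - p) * z) \<le> exp A"
    unfolding z_def A_def using p p1 g by (auto intro: geom1_gf_one_plus_le_exp)
  have "g * p - (g * p)\<^sup>2 \<le> ln z"
    unfolding z_def using g p1 p by (intro ln_one_plus_pos_lower_bound) (auto simp: mult_le_one)
  then have z_pow: "exp (real n * (g * p - (g * p)\<^sup>2)) \<le> z ^ n"
    using exp_mult_le_powr[of z "real n"] g p by (simp add: z_def powr_realpow add_pos_nonneg)
  have key: "(1 - \<delta>) * A - g + g\<^sup>2 * p \<le> - (\<delta>\<^sup>2 / 8)"
    unfolding A_def g_def using p \<delta> by (rule sum_ge_exponent_bound)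
  have "measure_pmf.prob (frag_lengths n p) {N. n \<le> (\<Sum>i<m. N i)} \<le> (p * z / (1 - (1 - p) * z)) ^ m / z ^ n"
    using g p p1 \<open>m \<le> n\<close> gf(1) by (intro prob_partial_sum_ge_chernoff) (auto simp: z_def)
  also have "\<dots> \<le> exp (real m * A - real n * (g * p - (g * p)\<^sup>2))"
    using gf z_pow g p by (intro power_divide_le_exp) (auto simp: z_def)
  also have "\<dots> \<le> exp (real n * p * (1 - \<delta>) * A - real n * (g * p - (g * p)\<^sup>2))"
    using m g p by (auto simp: A_def intro!: mult_right_mono)
  also have "\<dots> = exp (real n * p * ((1 - \<delta>) * A - g + g\<^sup>2 * p))"
    by (simp add: algebra_simps power2_eq_square)
  also have "\<dots> \<le> exp (- (real n * p * \<delta>\<^sup>2 / 8))"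
    using p mult_left_mono[OF key, of "real n * p"] by simp
  finally show ?thesis .
qed

lemma prob_partial_sum_lt_exp:
  fixes p \<delta> :: real and m n :: nat
  assumes p: "0 < p" "p \<le> 3 * \<delta>\<^sup>2 / 64" and \<delta>: "0 < \<delta>" "\<delta> \<le> 1/4"
    and m: "real n * p * (1 + \<delta>) \<le> real m" "m \<le> n"
  shows "measure_pmf.prob (frag_lengths n p) {N. (\<Sum>i<m. N i) < n} \<le> exp (- (real n * p * \<delta>\<^sup>2 / 8))"
proof -
  define g where "g = \<delta> / 4"
  define z where "z = 1 - g * p"
  define y where "y = g * (1 - p)"
  define A where "A = - (y - y\<^sup>2)"
  have g: "0 < g" "g \<le> 1/16"
    using \<delta> by (auto simp: g_def)
  have "\<delta>\<^sup>2 \<le> (1/4)\<^sup>2"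
    using \<delta> by (intro power_mono) auto
  then have p1: "p \<le> 1/256"
    using p by (simp add: power2_eq_square)
  have gp: "0 \<le> g * p" "g * p \<le> 1/2" and y: "0 \<le> y" "y \<le> g"
    using g p p1 by (auto simp: y_def mult_le_one algebra_simps)
  have gf: "0 \<le> p * z / (1 - (1 - p) * z)" "p * z / (1 - (1 - p) * z) \<le> exp A"
    unfolding z_def A_def y_def using p p1 g by (intro geom1_gf_one_minus_le_exp; simp)+
  have "- (g * p) - 2 * (g * p)\<^sup>2 \<le> ln z"
    unfolding z_def using gp by (intro ln_one_minus_pos_lower_bound) auto
  then have z_pow: "exp (real n * (- (g * p) - 2 * (g * p)\<^sup>2)) \<le> z ^ n"
    using exp_mult_le_powr[of z "real n"] gp by (simp add: z_def powr_realpow)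
  have key: "(1 + \<delta>) * A + g + 2 * g\<^sup>2 * p \<le> - (\<delta>\<^sup>2 / 8)"
    unfolding A_def y_def g_def using p \<delta> by (rule sum_lt_exponent_bound)
  have "0 \<le> y - y\<^sup>2"
    using y g by (simp add: power2_eq_square mult_left_le_one_le)
  have "measure_pmf.prob (frag_lengths n p) {N. (\<Sum>i<m. N i) < n} \<le> (p * z / (1 - (1 - p) * z)) ^ m / z ^ n"
    using p p1 m gp mult_pos_pos[OF g(1) p(1)] by (intro prob_partial_sum_lt_chernoff) (auto simp: z_def)
  also have "\<dots> \<le> exp (real m * A - real n * (- (g * p) - 2 * (g * p)\<^sup>2))"
    using gf z_pow by (rule power_divide_le_exp)
  also have "\<dots> \<le> exp (real n * p * (1 + \<delta>) * A - real n * (- (g * p) - 2 * (g * p)\<^sup>2))"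
    using m(1) \<open>0 \<le> y - y\<^sup>2\<close> by (auto simp: A_def intro!: mult_right_mono_neg)
  also have "\<dots> = exp (real n * p * ((1 + \<delta>) * A + g + 2 * g\<^sup>2 * p))"
    by (simp add: algebra_simps power2_eq_square)
  also have "\<dots> \<le> exp (- (real n * p * \<delta>\<^sup>2 / 8))"
    using p mult_left_mono[OF key, of "real n * p"] by simp
  finally show ?thesis .
qed

lemma prob_count_gt_exp:
  fixes D :: "'a pmf" and P :: "'a \<Rightarrow> bool" and e x :: real
  defines "q \<equiv> measure_pmf.prob D {v. P v}"
  assumes e: "0 < e" "e \<le> 1" and x: "0 \<le> x"
    and m: "real m \<le> x * (1 + e / 4) + 1" "m \<le> n"
  shows "measure_pmf.prob (Pi_pmf {..<n} d (\<lambda>_. D)) {N. x * q + e * x < real (card {i. i < m \<and> P (N i)})}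
    \<le> exp (1 - x * e\<^sup>2 / 16)"
proof -
  define h where "h = e / 4"
  have e_eq: "e = 4 * h"
    by (simp add: h_def)
  have h: "0 < h" "h \<le> 1/4" and q: "0 \<le> q" "q \<le> 1"
    using e by (auto simp: h_def q_def)
  have qh: "0 \<le> q * h" "q * h \<le> 1"
    using h q mult_le_one[of q h] by auto
  have "h - h\<^sup>2 \<le> ln (1 + h)"
    using h by (intro ln_one_plus_pos_lower_bound) auto
  then have den: "exp ((x * q + e * x) * (h - h\<^sup>2)) \<le> (1 + e / 4) powr (x * q + e * x)"
    using exp_mult_le_powr[of "1 + h" "x * q + e * x"] h q x e by (simp add: h_def)
  have "measure_pmf.prob (Pi_pmf {..<n} d (\<lambda>_. D)) {N. x * q + e * x < real (card {i. i < m \<and> P (N i)})}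
      \<le> (1 - q + q * (1 + e / 4)) ^ m / (1 + e / 4) powr (x * q + e * x)"
    unfolding q_def using m(2) e by (intro prob_count_gt_chernoff) auto
  also have "\<dots> \<le> exp (real m * (q * h) - (x * q + e * x) * (h - h\<^sup>2))"
    using den qh exp_ge_add_one_self[of "q * h"] by (intro power_divide_le_exp) (auto simp: h_def algebra_simps)
  also have "\<dots> \<le> exp ((x * (1 + h) + 1) * (q * h) - (x * q + e * x) * (h - h\<^sup>2))"
    using m(1) qh by (simp add: h_def mult_right_mono)
  also have "\<dots> \<le> exp (1 - x * e\<^sup>2 / 16)"
  proof -
    have "(x * (1 + h) + 1) * (q * h) - (x * q + e * x) * (h - h\<^sup>2)
        = 2 * (q * (x * h\<^sup>2)) + q * h - 4 * (x * h\<^sup>2) + 4 * (h * (x * h\<^sup>2))"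
      by (simp add: e_eq algebra_simps power2_eq_square)
    moreover have "q * (x * h\<^sup>2) \<le> x * h\<^sup>2"
      using q x by (intro mult_left_le_one_le) auto
    moreover have "h * (x * h\<^sup>2) \<le> (1/4) * (x * h\<^sup>2)"
      using h x by (intro mult_right_mono) auto
    moreover have "x * h\<^sup>2 = x * e\<^sup>2 / 16"
      by (simp add: h_def power_divide)
    ultimately show ?thesis
      using qh by simp
  qed
  finally show ?thesis .
qed

lemma prob_count_lt_exp:
  fixes D :: "'a pmf" and P :: "'a \<Rightarrow> bool" and e x :: real
  defines "q \<equiv> measure_pmf.prob D {v. P v}"
  assumes e: "0 < e" "e \<le> 1" and x: "0 \<le> x"
    and m: "x * (1 - e / 4) - 1 \<le> real m" "m \<le> n"
  shows "measure_pmf.prob (Pi_pmf {..<n} d (\<lambda>_. D)) {N. real (card {i. i < m \<and> P (N i)}) < x * q - e * x}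
    \<le> exp (1 - x * e\<^sup>2 / 16)"
proof (cases "0 \<le> x * q - e * x")
  case False
  then have "{N. real (card {i. i < m \<and> P (N i)}) < x * q - e * x} = {}"
    by auto
  then show ?thesis
    by simp
next
  case True
  define h where "h = e / 4"
  have e_eq: "e = 4 * h"
    by (simp add: h_def)
  have h: "0 < h" "h \<le> 1/4" and q: "0 \<le> q" "q \<le> 1"
    using e by (auto simp: h_def q_def)
  have qh: "0 \<le> q * h" "q * h \<le> 1/4"
    using h q mult_mono[of q 1 h "1/4"] by auto
  have "- h - 2 * h\<^sup>2 \<le> ln (1 - h)"
    using h by (intro ln_one_minus_pos_lower_bound) auto
  then have den: "exp ((x * q - e * x) * (- h - 2 * h\<^sup>2)) \<le> (1 - e / 4) powr (x * q - e * x)"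
    using exp_mult_le_powr[of "1 - h" "x * q - e * x"] h True by (simp add: h_def)
  have "measure_pmf.prob (Pi_pmf {..<n} d (\<lambda>_. D)) {N. real (card {i. i < m \<and> P (N i)}) < x * q - e * x}
      \<le> (1 - q + q * (1 - e / 4)) ^ m / (1 - e / 4) powr (x * q - e * x)"
    unfolding q_def using m(2) e by (intro prob_count_lt_chernoff) auto
  also have "\<dots> \<le> exp (real m * (- (q * h)) - (x * q - e * x) * (- h - 2 * h\<^sup>2))"
    using den qh exp_ge_add_one_self[of "- (q * h)"] by (intro power_divide_le_exp) (auto simp: h_def algebra_simps)
  also have "\<dots> \<le> exp ((x * (1 - h) - 1) * (- (q * h)) - (x * q - e * x) * (- h - 2 * h\<^sup>2))"
    using mult_right_mono[OF m(1), of "q * h"] qh by (simp add: h_def)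
  also have "\<dots> \<le> exp (1 - x * e\<^sup>2 / 16)"
  proof -
    have "(x * (1 - h) - 1) * (- (q * h)) - (x * q - e * x) * (- h - 2 * h\<^sup>2)
        = 3 * (q * (x * h\<^sup>2)) + q * h - 4 * (x * h\<^sup>2) - 8 * (h * (x * h\<^sup>2))"
      by (simp add: e_eq algebra_simps power2_eq_square)
    moreover have "q * (x * h\<^sup>2) \<le> x * h\<^sup>2" "0 \<le> h * (x * h\<^sup>2)"
      using q h x by (auto intro!: mult_left_le_one_le)
    moreover have "x * h\<^sup>2 = x * e\<^sup>2 / 16"
      by (simp add: h_def power_divide)
    ultimately show ?thesis
      using qh by simp
  qed
  finally show ?thesis .
qed

lemma tp_K_between:
  assumes "(\<Sum>i<a. N i) < n" "n \<le> (\<Sum>i<b. N i)"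
  shows "a \<le> tp_K n N" "tp_K n N \<le> b"
proof -
  have b: "real n \<le> (\<Sum>i<b. real (N i))"
    using assms(2) by (simp flip: of_nat_sum)
  then show "tp_K n N \<le> b"
    unfolding tp_K_def by (rule Least_le)
  have "real n \<le> (\<Sum>i<tp_K n N. real (N i))"
    unfolding tp_K_def using b by (rule LeastI)
  then have "\<not> (\<Sum>i<tp_K n N. N i) \<le> (\<Sum>i<a. N i)"
    using assms(1) by (simp flip: of_nat_sum)
  then show "a \<le> tp_K n N"
    by (meson not_le_imp_less sum_mono2 finite_lessThan lessThan_subset_iff zero_le less_imp_le)
qed

lemma prob_count_deviation_le_tails:
  fixes M :: "(nat \<Rightarrow> nat) pmf" and x q e :: real and P :: "nat \<Rightarrow> bool"
  defines "C m N \<equiv> real (card {i. i < m \<and> P (N i)})"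
  shows "measure_pmf.prob M {N. e * x < \<bar>C (tp_K n N) N - x * q\<bar>}
    \<le> measure_pmf.prob M {N. n \<le> (\<Sum>i<a. N i)} + measure_pmf.prob M {N. (\<Sum>i<b. N i) < n}
      + measure_pmf.prob M {N. x * q + e * x < C b N} + measure_pmf.prob M {N. C a N < x * q - e * x}"
proof -
  let ?EA = "{N. n \<le> (\<Sum>i<a. N i)}" and ?EB = "{N. (\<Sum>i<b. N i) < n}"
  let ?EC = "{N. x * q + e * x < C b N}" and ?ED = "{N. C a N < x * q - e * x}"
  have "{N. e * x < \<bar>C (tp_K n N) N - x * q\<bar>} \<subseteq> ?EA \<union> ?EB \<union> ?EC \<union> ?ED"
  proof
    fix N assume "N \<in> {N. e * x < \<bar>C (tp_K n N) N - x * q\<bar>}"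
    moreover have "C a N \<le> C (tp_K n N) N" "C (tp_K n N) N \<le> C b N"
      if "(\<Sum>i<a. N i) < n" "n \<le> (\<Sum>i<b. N i)"
      using tp_K_between[OF that] unfolding C_def by (auto intro!: card_mono)
    ultimately show "N \<in> ?EA \<union> ?EB \<union> ?EC \<union> ?ED"
      by (auto simp: abs_if not_le split: if_splits)
  qed
  then have "measure_pmf.prob M {N. e * x < \<bar>C (tp_K n N) N - x * q\<bar>}
      \<le> measure_pmf.prob M (?EA \<union> ?EB \<union> ?EC \<union> ?ED)"
    by (intro measure_pmf.finite_measure_mono) auto
  moreover have union: "measure_pmf.prob M (A \<union> B) \<le> measure_pmf.prob M A + measure_pmf.prob M B" for A B
    by (rule measure_subadditive) (auto simp: measure_pmf.emeasure_eq_measure)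
  ultimately show ?thesis
    using union[of "?EA \<union> ?EB \<union> ?EC" ?ED] union[of "?EA \<union> ?EB" ?EC] union[of ?EA ?EB] by linarith
qed

lemma prob_count_deviation_le_window:
  fixes p e :: real and P :: "nat \<Rightarrow> bool" and a b n :: nat
  defines "q \<equiv> measure_pmf.prob (geom1 p) {v. P v}" and "x \<equiv> real n * p"
  assumes p: "0 < p" "p \<le> e\<^sup>2 / 512" and e: "0 < e" "e \<le> 1"
    and a: "real a \<le> x * (1 - e / 4)" "x * (1 - e / 4) - 1 \<le> real a"
    and b: "x * (1 + e / 4) \<le> real b" "real b \<le> x * (1 + e / 4) + 1" "b \<le> n"
  shows "measure_pmf.prob (frag_lengths n p)
      {N. e * x < \<bar>real (card {i. i < tp_K n N \<and> P (N i)}) - x * q\<bar>}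
    \<le> 4 * exp (1 - x * e\<^sup>2 / 128)"
proof -
  let ?M = "frag_lengths n p"
  let ?C = "\<lambda>m N. real (card {i. i < m \<and> P (N i)})"
  have x: "0 \<le> x" and e2: "(e / 4)\<^sup>2 = e\<^sup>2 / 16"
    using p by (simp_all add: x_def power_divide)
  have "x * (1 - e / 4) \<le> x * (1 + e / 4)"
    using x e by (intro mult_left_mono) auto
  then have "a \<le> n"
    using a b by linarith
  have "measure_pmf.prob ?M {N. e * x < \<bar>?C (tp_K n N) N - x * q\<bar>}
      \<le> measure_pmf.prob ?M {N. n \<le> (\<Sum>i<a. N i)} + measure_pmf.prob ?M {N. (\<Sum>i<b. N i) < n}
      + measure_pmf.prob ?M {N. x * q + e * x < ?C b N} + measure_pmf.prob ?M {N. ?C a N < x * q - e * x}"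
    by (rule prob_count_deviation_le_tails)
  also have "\<dots> \<le> exp (1 - x * e\<^sup>2 / 128) + exp (1 - x * e\<^sup>2 / 128)
      + exp (1 - x * e\<^sup>2 / 128) + exp (1 - x * e\<^sup>2 / 128)"
  proof (intro add_mono)
    have "p \<le> (e / 4)\<^sup>2 / 8" "p \<le> 3 * (e / 4)\<^sup>2 / 64"
      using p by (simp_all add: e2)
    then show "measure_pmf.prob ?M {N. n \<le> (\<Sum>i<a. N i)} \<le> exp (1 - x * e\<^sup>2 / 128)"
      and "measure_pmf.prob ?M {N. (\<Sum>i<b. N i) < n} \<le> exp (1 - x * e\<^sup>2 / 128)"
      using prob_partial_sum_ge_exp[of p "e / 4" a n] prob_partial_sum_lt_exp[of p "e / 4" n b] p e a b
      by (auto simp: x_def e2 elim!: order.trans)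
    have "exp (1 - x * e\<^sup>2 / 16) \<le> exp (1 - x * e\<^sup>2 / 128)"
      using x by simp
    then show "measure_pmf.prob ?M {N. x * q + e * x < ?C b N} \<le> exp (1 - x * e\<^sup>2 / 128)"
      and "measure_pmf.prob ?M {N. ?C a N < x * q - e * x} \<le> exp (1 - x * e\<^sup>2 / 128)"
      unfolding frag_lengths_def q_def using a b \<open>a \<le> n\<close> e x
      by (auto intro: order.trans[OF prob_count_gt_exp] order.trans[OF prob_count_lt_exp])
  qed
  finally show ?thesis
    by simp
qed

lemma prob_count_deviation_le:
  fixes p e :: real and P :: "nat \<Rightarrow> bool"
  defines "q \<equiv> measure_pmf.prob (geom1 p) {v. P v}"
  assumes p: "0 < p" "p \<le> e\<^sup>2 / 512" and e: "0 < e" "e \<le> 1"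
  shows "measure_pmf.prob (frag_lengths n p)
      {N. e * (real n * p) < \<bar>real (card {i. i < tp_K n N \<and> P (N i)}) - real n * p * q\<bar>}
    \<le> 4 * exp (1 - real n * p * e\<^sup>2 / 128)"
proof -
  define x where "x = real n * p"
  define a where "a = nat \<lfloor>x * (1 - e / 4)\<rfloor>"
  define b where "b = nat \<lceil>x * (1 + e / 4)\<rceil>"
  have x: "0 \<le> x" and "e\<^sup>2 \<le> 1"
    using p e by (simp_all add: x_def power_le_one)
  then have "p * (1 + e / 4) \<le> 1"
    using p e mult_mono[of p "1/512" "1 + e / 4" "5/4"] by auto
  then have "x * (1 + e / 4) \<le> real n"
    using mult_left_le[of "p * (1 + e / 4)" "real n"] by (simp add: x_def mult.assoc)
  moreover have "real a = of_int \<lfloor>x * (1 - e / 4)\<rfloor>" "real b = of_int \<lceil>x * (1 + e / 4)\<rceil>"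
    using x e by (simp_all add: a_def b_def)
  ultimately have "real a \<le> x * (1 - e / 4)" "x * (1 - e / 4) - 1 \<le> real a"
    and "x * (1 + e / 4) \<le> real b" "real b \<le> x * (1 + e / 4) + 1" "b \<le> n"
    by linarith+
  then show ?thesis
    unfolding q_def using prob_count_deviation_le_window[OF p e, of a n b P] by (simp add: x_def)
qed

lemma prob_count_deviation_bound:
  fixes p \<epsilon> :: real and P :: "nat \<Rightarrow> bool"
  defines "q \<equiv> measure_pmf.prob (geom1 p) {v. P v}"
  assumes p: "0 < p" "p \<le> (min \<epsilon> 1)\<^sup>2 / 512" "p * \<epsilon>\<^sup>2 \<le> (min \<epsilon> 1)\<^sup>2 / 64" and "0 < \<epsilon>"
  shows "measure_pmf.prob (frag_lengths n p)
      {N. \<bar>real (card {i. i < tp_K n N \<and> P (N i)}) - real n * p * q\<bar> > \<epsilon> * real n * p}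
    \<le> 4 * exp (- real n * p\<^sup>2 * \<epsilon>\<^sup>2 / 4)"
proof (cases "1 \<le> 4 * exp (- real n * p\<^sup>2 * \<epsilon>\<^sup>2 / 4)")
  case True
  moreover have "measure_pmf.prob (frag_lengths n p)
      {N. \<bar>real (card {i. i < tp_K n N \<and> P (N i)}) - real n * p * q\<bar> > \<epsilon> * real n * p} \<le> 1"
    by (rule measure_pmf.prob_le_1)
  ultimately show ?thesis
    by linarith
next
  case False
  define e where "e = min \<epsilon> 1"
  define y where "y = real n * p\<^sup>2 * \<epsilon>\<^sup>2 / 4"
  have e: "0 < e" "e \<le> 1" "e \<le> \<epsilon>"
    using \<open>0 < \<epsilon>\<close> by (auto simp: e_def)
  have "exp (- y) < 1 / 4"
    using False by (simp add: y_def)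
  also have "\<dots> < exp (- 1)"
    using exp_le by (simp add: exp_minus inverse_eq_divide field_simps)
  finally have "1 < y"
    by simp
  have "y = real n * p * (p * \<epsilon>\<^sup>2) / 4"
    by (simp add: y_def power2_eq_square)
  also have "\<dots> \<le> real n * p * (e\<^sup>2 / 64) / 4"
    using p by (intro divide_right_mono mult_left_mono) (auto simp: e_def)
  finally have y_le: "y \<le> real n * p * e\<^sup>2 / 256"
    by simp
  have "e * (real n * p) \<le> \<epsilon> * real n * p"
    using e p mult_right_mono[of e \<epsilon> "real n * p"] by (simp add: mult.assoc)
  then have "measure_pmf.prob (frag_lengths n p)
      {N. \<bar>real (card {i. i < tp_K n N \<and> P (N i)}) - real n * p * q\<bar> > \<epsilon> * real n * p}
    \<le> measure_pmf.prob (frag_lengths n p)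
      {N. e * (real n * p) < \<bar>real (card {i. i < tp_K n N \<and> P (N i)}) - real n * p * q\<bar>}"
    by (intro measure_pmf.finite_measure_mono) auto
  also have "\<dots> \<le> 4 * exp (1 - real n * p * e\<^sup>2 / 128)"
    unfolding q_def by (rule prob_count_deviation_le[OF p(1) p(2)[folded e_def] e(1,2)])
  also have "\<dots> \<le> 4 * exp (- y)"
    using y_le \<open>1 < y\<close> by simp
  finally show ?thesis
    by (simp add: y_def)
qed

lemma tendsto_zero_of_mult_log:
  fixes p :: "nat \<Rightarrow> real"
  assumes "(\<lambda>n. p n * log 2 (real n)) \<longlonglongrightarrow> \<alpha>"
  shows "p \<longlonglongrightarrow> 0"
proof -
  have "filterlim (\<lambda>n. log 2 (real n)) at_top sequentially"
    by real_asymp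
  then have "(\<lambda>n. p n * log 2 (real n) / log 2 (real n)) \<longlonglongrightarrow> 0"
    using assms by (intro tendsto_divide_0 filterlim_at_top_imp_at_infinity)
  moreover have "\<forall>\<^sub>F n in sequentially. p n * log 2 (real n) / log 2 (real n) = p n"
    using eventually_ge_at_top[of 2] by eventually_elim (simp add: less_imp_neq[symmetric])
  ultimately show ?thesis
    by (rule Lim_transform_eventually)
qed

theorem lemma1:
  fixes p :: "nat \<Rightarrow> real" and \<alpha> :: real and L k :: nat and \<epsilon> :: real
  assumes "\<And>n. 0 < p n \<and> p n < 1"
    and "(\<lambda>n. p n * log 2 (real n)) \<longlonglongrightarrow> \<alpha>"
    and "L > 0" and "k > 0" and "\<epsilon> > 0"
  shows "\<forall>\<^sub>F n in sequentially.
    measure_pmf.prob (frag_lengths n (p n))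
      {N. \<bar>real (count_Yk n L k N) - real n * p n * q_kn L k n (p n)\<bar> > \<epsilon> * real n * p n}
    \<le> 4 * exp (- real n * (p n)\<^sup>2 * \<epsilon>\<^sup>2 / 4)"
proof -
  define c where "c = min ((min \<epsilon> 1)\<^sup>2 / 512) ((min \<epsilon> 1)\<^sup>2 / 64 / \<epsilon>\<^sup>2)"
  have "0 < c"
    using \<open>\<epsilon> > 0\<close> by (simp add: c_def)
  then have "\<forall>\<^sub>F n in sequentially. p n < c"
    by (rule order_tendstoD(2)[OF tendsto_zero_of_mult_log[OF assms(2)]])
  with eventually_ge_at_top[of 2] show ?thesis
  proof eventually_elim
    case (elim n)
    define P where "P v \<longleftrightarrow> (real k - 1) / real L * log 2 (real n) \<le> real v \<and> real v < real k / real L * log 2 (real n)" for v :: nat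
    have "0 < log 2 (real n)"
      using elim by simp
    then have q: "q_kn L k n (p n) = measure_pmf.prob (geom1 (p n)) {v. P v}"
      unfolding q_kn_def P_def by (simp add: le_divide_eq divide_less_eq)
    have "p n \<le> (min \<epsilon> 1)\<^sup>2 / 512" "p n < (min \<epsilon> 1)\<^sup>2 / 64 / \<epsilon>\<^sup>2"
      using elim by (simp_all add: c_def)
    moreover from this(2) have "p n * \<epsilon>\<^sup>2 \<le> (min \<epsilon> 1)\<^sup>2 / 64"
      using \<open>\<epsilon> > 0\<close> by (simp add: pos_less_divide_eq)
    ultimately show ?case
      unfolding count_Yk_def P_def[symmetric] q
      using assms(1,5) by (intro prob_count_deviation_bound) auto
  qed
qed

end
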